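(* Let $1<\chi\le\rho$ and let $G$ be a $(\rho,\chi)$-bidding profile. Then for every $T>0$, \[ \tau(T):=\sup\{t\in\mathbb{R}:G(t)<T\}<\infty \quad\text{and}\quad \mathrm{cost}_G(T)=\int_{-\infty}^{\tau(T)+1}G(t)\,\mathrm{d} t . \]
   Context: Online bidding with target $T>0$: a bidder submits increasing positive bids until one is $\ge T$; the cost is the sum of bids up to and including the first bid $\ge T$. Given $1<\chi\le\rho$, a $(\rho,\chi)$-bidding profile is a non-decreasing, left-continuous function $G:\mathbb{R}\to(0,\infty)$ such that (offset) $G(x)<1$ for all $x<0$ and $G(x)\ge 1$ for all $x>0$; (robustness) $\int_{-\infty}^{x+1}G(t)\,\mathrm{d} t\le \rho\,G(x)$ for all $x\in\mathbb{R}$; (consistency) $\int_{-\infty}^{1}G(t)\,\mathrm{d} t\le\chi$. The strategy driven by $G$ is the random bi-infinite bid sequence $(G(n+U))_{n\in\mathbb{Z}}$, where $U\sim\mathrm{Unif}(0,1]$ is a single random variable shared by all $n$; its cost on target $T$ is $\sum_{n\le n_*}G(n+U)$ with $n_*=\min\{n: G(n+U)\ge T\}$, and $\mathrm{cost}_G(T)$ denotes the expectation of this cost over $U$. *)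

theory Defs
  imports "HOL-Analysis.Analysis"
begin

text \<open>Integral of a positive function over (-infinity, x], as an extended
  nonnegative real (so that finiteness is part of any upper bound).\<close>
definition lower_int :: "(real \<Rightarrow> real) \<Rightarrow> real \<Rightarrow> ennreal" where
  "lower_int G x = (\<integral>\<^sup>+ t\<in>{..x}. ennreal (G t) \<partial>lborel)"

definition bidding_profile :: "real \<Rightarrow> real \<Rightarrow> (real \<Rightarrow> real) \<Rightarrow> bool" where
  "bidding_profile rho chi G \<longleftrightarrow>
     mono G \<and>
     (\<forall>x. continuous (at_left x) G) \<and>
     (\<forall>x. G x > 0) \<and>
     (\<forall>x<0. G x < 1) \<and>
     (\<forall>x>0. G x \<ge> 1) \<and>
     (\<forall>x. lower_int G (x + 1) \<le> ennreal (rho * G x)) \<and>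
     lower_int G 1 \<le> ennreal chi"

definition first_idx :: "(real \<Rightarrow> real) \<Rightarrow> real \<Rightarrow> real \<Rightarrow> int" where
  "first_idx G T u = (LEAST n::int. G (real_of_int n + u) \<ge> T)"

definition run_cost :: "(real \<Rightarrow> real) \<Rightarrow> real \<Rightarrow> real \<Rightarrow> ennreal" where
  "run_cost G T u =
     (\<integral>\<^sup>+ n. indicator {..first_idx G T u} n * ennreal (G (real_of_int n + u)) \<partial>count_space UNIV)"

text \<open>Expected cost over U uniform on (0,1] (density 1 on (0,1]).\<close>
definition cost :: "(real \<Rightarrow> real) \<Rightarrow> real \<Rightarrow> ennreal" where
  "cost G T = (\<integral>\<^sup>+ u\<in>{0<..1}. run_cost G T u \<partial>lborel)"

end

theory Submission
  imports Defs
begin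

text \<open>Let \<tau> = sup {t. G t < T}. For almost every offset u the first bid reaching T is
  G(n + u) with n = \<lfloor>\<tau> - u\<rfloor> + 1, so the bids paid are exactly the values G(n + u) with
  n + u \<le> \<tau> + 1. Averaging over u \<in> (0,1] turns this sum into the integral of G over
  (-\<infinity>, \<tau> + 1], since the translates n + (0,1] tile the real line. That \<tau> is finite follows
  from the two integral constraints: consistency forbids G \<ge> T everywhere, and robustness
  forces G x \<ge> (x + 1) / \<rho> for x \<ge> 0.\<close>

lemma nn_integral_periodize:
  fixes f :: "real \<Rightarrow> ennreal"
  assumes [measurable]: "f \<in> borel_measurable borel"
  shows "(\<integral>\<^sup>+u\<in>{0<..1}. (\<integral>\<^sup>+n. f (real_of_int n + u) \<partial>count_space UNIV) \<partial>lborel)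
       = (\<integral>\<^sup>+t. f t \<partial>lborel)"
proof -
  have shift: "(\<integral>\<^sup>+u. f (real_of_int n + u) * indicator {0<..1} u \<partial>lborel)
             = (\<integral>\<^sup>+t. f t * indicator {real_of_int n<..real_of_int n + 1} t \<partial>lborel)" for n :: int
    by (subst nn_integral_real_affine[where c = 1 and t = "real_of_int n"])
       (auto intro!: nn_integral_cong simp: indicator_def)
  have tile: "(\<integral>\<^sup>+n. f t * indicator {real_of_int n<..real_of_int n + 1} t \<partial>count_space UNIV) = f t"
    for t :: real
  proof -
    have "indicator {real_of_int n<..real_of_int n + 1} t = (indicator {\<lceil>t\<rceil> - 1} n :: ennreal)"
      for n :: int
      by (auto simp: indicator_def) linarith+
    then show ?thesis
      by simp
  qed
  have "(\<integral>\<^sup>+u\<in>{0<..1}. (\<integral>\<^sup>+n. f (real_of_int n + u) \<partial>count_space UNIV) \<partial>lborel)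
      = (\<integral>\<^sup>+u. \<integral>\<^sup>+n. f (real_of_int n + u) * indicator {0<..1} u \<partial>count_space UNIV \<partial>lborel)"
    by (simp add: nn_integral_multc)
  also have "\<dots> = (\<integral>\<^sup>+n. \<integral>\<^sup>+u. f (real_of_int n + u) * indicator {0<..1} u \<partial>lborel \<partial>count_space UNIV)"
    by (rule nn_integral_count_space_nn_integral) auto
  also have "\<dots> = (\<integral>\<^sup>+n. \<integral>\<^sup>+t. f t * indicator {real_of_int n<..real_of_int n + 1} t
                      \<partial>lborel \<partial>count_space UNIV)"
    by (simp only: shift)
  also have "\<dots> = (\<integral>\<^sup>+t. \<integral>\<^sup>+n. f t * indicator {real_of_int n<..real_of_int n + 1} t
                      \<partial>count_space UNIV \<partial>lborel)"
    by (rule nn_integral_count_space_nn_integral[symmetric]) auto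
  also have "\<dots> = (\<integral>\<^sup>+t. f t \<partial>lborel)"
    by (simp only: tile)
  finally show ?thesis .
qed

lemma mono_less_below_Sup_sublevel:
  fixes G :: "real \<Rightarrow> real"
  assumes "mono G" and "{t. G t < T} \<noteq> {}" and "bdd_above {t. G t < T}"
    and "t < Sup {t. G t < T}"
  shows "G t < T"
proof -
  obtain s where "G s < T" and "t < s"
    using assms(2-4) by (auto simp: less_cSup_iff)
  with \<open>mono G\<close> show ?thesis
    by (meson le_less_trans less_imp_le monoD)
qed

lemma ge_above_Sup_sublevel:
  fixes G :: "real \<Rightarrow> real"
  assumes "bdd_above {t. G t < T}" and "Sup {t. G t < T} < t"
  shows "T \<le> G t"
proof (rule ccontr)
  assume "\<not> T \<le> G t"
  then have "t \<le> Sup {t. G t < T}"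
    using assms(1) by (simp add: cSup_upper)
  with assms(2) show False
    by simp
qed

lemma first_idx_eq_floor:
  fixes G :: "real \<Rightarrow> real"
  assumes below: "\<And>t. t < \<tau> \<Longrightarrow> G t < T" and above: "\<And>t. \<tau> < t \<Longrightarrow> T \<le> G t"
    and off_grid: "\<And>n::int. real_of_int n + u \<noteq> \<tau>"
  shows "first_idx G T u = \<lfloor>\<tau> - u\<rfloor> + 1"
  unfolding first_idx_def
proof (rule Least_equality)
  show "T \<le> G (real_of_int (\<lfloor>\<tau> - u\<rfloor> + 1) + u)"
    by (rule above) linarith
next
  fix n :: int
  assume "T \<le> G (real_of_int n + u)"
  then have "\<not> real_of_int n + u < \<tau>"
    using below by force
  with off_grid[of n] show "\<lfloor>\<tau> - u\<rfloor> + 1 \<le> n"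
    by linarith
qed

lemma run_cost_eq_truncated_sum:
  fixes G :: "real \<Rightarrow> real"
  assumes "\<And>t. t < \<tau> \<Longrightarrow> G t < T" and "\<And>t. \<tau> < t \<Longrightarrow> T \<le> G t"
    and off_grid: "\<And>n::int. real_of_int n + u \<noteq> \<tau>"
  shows "run_cost G T u = (\<integral>\<^sup>+n. ennreal (G (real_of_int n + u)) * indicator {..\<tau> + 1} (real_of_int n + u)
                             \<partial>count_space UNIV)"
  unfolding run_cost_def
proof (rule nn_integral_cong)
  fix n :: int
  have "first_idx G T u = \<lfloor>\<tau> - u\<rfloor> + 1"
    by (intro first_idx_eq_floor assms)
  have "n \<le> \<lfloor>\<tau> - u\<rfloor> + 1 \<longleftrightarrow> real_of_int n + u \<le> \<tau> + 1"
    using off_grid[of n] by linarith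
  with \<open>first_idx G T u = \<lfloor>\<tau> - u\<rfloor> + 1\<close>
  show "indicator {..first_idx G T u} n * ennreal (G (real_of_int n + u))
           = ennreal (G (real_of_int n + u)) * indicator {..\<tau> + 1} (real_of_int n + u)"
    by (simp add: indicator_def)
qed

lemma cost_eq_lower_int:
  fixes G :: "real \<Rightarrow> real"
  assumes "mono G" and "\<And>t. t < \<tau> \<Longrightarrow> G t < T" and "\<And>t. \<tau> < t \<Longrightarrow> T \<le> G t"
  shows "cost G T = lower_int G (\<tau> + 1)"
proof -
  have [measurable]: "G \<in> borel_measurable borel"
    using \<open>mono G\<close> by (rule borel_measurable_mono)
  let ?grid = "range (\<lambda>n::int. \<tau> - real_of_int n)"
  have "?grid \<in> null_sets lborel"
    by (rule countable_imp_null_set_lborel) simp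
  moreover have "real_of_int n + u \<noteq> \<tau>" if "u \<notin> ?grid" for u n
    using that by (metis add_diff_cancel_left' rangeI)
  ultimately have "AE u in lborel. run_cost G T u = (\<integral>\<^sup>+n. ennreal (G (real_of_int n + u))
               * indicator {..\<tau> + 1} (real_of_int n + u) \<partial>count_space UNIV)"
    by (intro AE_I') (auto intro!: run_cost_eq_truncated_sum assms)
  then have "cost G T = (\<integral>\<^sup>+u\<in>{0<..1}. (\<integral>\<^sup>+n. ennreal (G (real_of_int n + u))
                                * indicator {..\<tau> + 1} (real_of_int n + u) \<partial>count_space UNIV) \<partial>lborel)"
    unfolding cost_def by (intro nn_integral_cong_AE) auto
  also have "\<dots> = (\<integral>\<^sup>+t. ennreal (G t) * indicator {..\<tau> + 1} t \<partial>lborel)"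
    by (rule nn_integral_periodize) measurable
  finally show ?thesis
    by (simp add: lower_int_def)
qed

lemma lower_int_ge_interval:
  fixes G :: "real \<Rightarrow> real"
  assumes "0 \<le> r" and "0 \<le> c" and "\<And>t. x - r < t \<Longrightarrow> t \<le> x \<Longrightarrow> c \<le> G t"
  shows "ennreal (c * r) \<le> lower_int G x"
proof -
  have "ennreal (c * r) = (\<integral>\<^sup>+t. ennreal c * indicator {x - r<..x} t \<partial>lborel)"
    using assms by (simp add: nn_integral_cmult_indicator ennreal_mult)
  also have "\<dots> \<le> lower_int G x"
    unfolding lower_int_def using assms
    by (intro nn_integral_mono) (auto simp: indicator_def ennreal_leI)
  finally show ?thesis .
qed

lemma bidding_profile_sublevel_nonempty:
  assumes "bidding_profile rho chi G" and "0 < T"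
  shows "{t. G t < T} \<noteq> {}"
proof
  assume "{t. G t < T} = {}"
  then have "T \<le> G t" for t
    by (auto simp: not_less)
  then have "ennreal (T * ((\<bar>chi\<bar> + 1) / T)) \<le> lower_int G 1"
    using \<open>0 < T\<close> by (intro lower_int_ge_interval) auto
  also have "\<dots> \<le> ennreal chi"
    using assms(1) by (simp add: bidding_profile_def)
  finally show False
    using \<open>0 < T\<close> by (auto simp only: ennreal_le_iff2; simp add: field_simps)
qed

lemma bidding_profile_growth:
  assumes "bidding_profile rho chi G" and "0 \<le> x"
  shows "x + 1 \<le> rho * G x"
proof -
  have "ennreal (1 * (x + 1)) \<le> lower_int G (x + 1)"
    using assms by (intro lower_int_ge_interval) (auto simp: bidding_profile_def)
  also have "\<dots> \<le> ennreal (rho * G x)"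
    using assms(1) by (simp add: bidding_profile_def)
  finally show ?thesis
    using \<open>0 \<le> x\<close> by (auto simp only: ennreal_le_iff2; simp add: field_simps)
qed

lemma bidding_profile_sublevel_bdd_above:
  assumes "bidding_profile rho chi G"
  shows "bdd_above {t. G t < T}"
proof (rule bdd_aboveI)
  have "1 \<le> rho * G 0" and "0 < G 0"
    using bidding_profile_growth[OF assms, of 0] assms by (auto simp: bidding_profile_def)
  then have "0 < rho"
    by (smt (verit) zero_less_mult_iff)
  fix t
  assume "t \<in> {t. G t < T}"
  show "t \<le> max 0 (rho * T)"
  proof (cases "0 \<le> t")
    case True
    then have "t + 1 \<le> rho * G t"
      by (rule bidding_profile_growth[OF assms])
    also have "\<dots> \<le> rho * T"
      using \<open>0 < rho\<close> \<open>t \<in> {t. G t < T}\<close> by simp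
    finally show ?thesis
      by simp
  qed simp
qed

theorem lemma1:
  fixes rho chi T :: real and G :: "real \<Rightarrow> real"
  assumes "1 < chi" and "chi \<le> rho"
    and "bidding_profile rho chi G"
    and "T > 0"
  shows "{t. G t < T} \<noteq> {} \<and> bdd_above {t. G t < T} \<and>
         cost G T = lower_int G (Sup {t. G t < T} + 1)"
proof (intro conjI)
  show nonempty: "{t. G t < T} \<noteq> {}"
    using assms(3,4) by (rule bidding_profile_sublevel_nonempty)
  show bdd: "bdd_above {t. G t < T}"
    using assms(3) by (rule bidding_profile_sublevel_bdd_above)
  have "mono G"
    using assms(3) by (simp add: bidding_profile_def)
  then show "cost G T = lower_int G (Sup {t. G t < T} + 1)"
  proof (rule cost_eq_lower_int)
    show "G t < T" if "t < Sup {t. G t < T}" for t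
      using \<open>mono G\<close> nonempty bdd that by (rule mono_less_below_Sup_sublevel)
    show "T \<le> G t" if "Sup {t. G t < T} < t" for t
      using bdd that by (rule ge_above_Sup_sublevel)
  qed
qed

end
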